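(* Let $H=P_3$ (the path $1-2-3$) and let $G_i$ be a $d_i$-regular graph of order $n_i$ with adjacency eigenvalues $d_i=\lambda_1(A(G_i)),\dots,\lambda_{n_i}(A(G_i))$, $i=1,2,3$, with $d_1=d_3$. Let $G=\bigvee_{P_3}\{G_1,G_2,G_3\}$ and $s\in\mathbb{R}$. Set $N_1=N_3=n_2$, $N_2=n_1+n_3$, $\sigma(M_i(s))=\{s^2(d_i+N_i-1)-s\lambda_k(A(G_i))+1\}_{k=1}^{n_i}$, $$a(s)=s^2(d_1+n_2-1)-sd_1+1,\qquad b(s)=s^2(d_2+(n_1+n_3)-1)-sd_2+1.$$ Then, as multisets, $$\sigma(M_G(s))=\Big(\bigcup_{i=1}^3\sigma(M_i(s))\cup\Big\{\tfrac12\big(a(s)+b(s)\pm\sqrt{(a(s)-b(s))^2+4s^2n_2(n_1+n_3)}\big)\Big\}\Big)-\{a(s),b(s)\},$$ where one copy each of $a(s)$ and $b(s)$ is removed.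
   Context: For a simple undirected graph $G$ with adjacency matrix $A$, degree matrix $D$ and identity $I$, and real $s$, the deformed Laplacian matrix is $M_G(s)=I-sA+s^2(D-I)$; $\sigma(\cdot)$ is the multiset of eigenvalues. $H$-join: given a graph $H$ on vertex set $\{1,\dots,r\}$ and pairwise vertex-disjoint graphs $G_1,\dots,G_r$, $\bigvee_H\{G_i\}$ has vertex set $\bigcup_iV(G_i)$ and edges $\bigcup_iE(G_i)$ together with all edges $uv$, $u\in V(G_i)$, $v\in V(G_j)$, for each $ij\in E(H)$. *)

theory Defs
  imports "Jordan_Normal_Form.Matrix" "Jordan_Normal_Form.Char_Poly"
          "HOL-Computational_Algebra.Fundamental_Theorem_Algebra"
begin

definition simple_graph :: "nat \<Rightarrow> (nat \<Rightarrow> nat \<Rightarrow> bool) \<Rightarrow> bool" where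
  "simple_graph n E \<longleftrightarrow>
     (\<forall>u v. E u v \<longrightarrow> u < n \<and> v < n) \<and> (\<forall>u v. E u v \<longrightarrow> E v u) \<and> (\<forall>u. \<not> E u u)"

definition degree :: "nat \<Rightarrow> (nat \<Rightarrow> nat \<Rightarrow> bool) \<Rightarrow> nat \<Rightarrow> nat" where
  "degree n E u = card {v. v < n \<and> E u v}"

definition regular :: "nat \<Rightarrow> (nat \<Rightarrow> nat \<Rightarrow> bool) \<Rightarrow> nat \<Rightarrow> bool" where
  "regular n E d \<longleftrightarrow> (\<forall>u < n. degree n E u = d)"

definition adj_mat :: "nat \<Rightarrow> (nat \<Rightarrow> nat \<Rightarrow> bool) \<Rightarrow> real mat" where
  "adj_mat n E = mat n n (\<lambda>(u, v). if E u v then 1 else 0)"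

definition deg_mat :: "nat \<Rightarrow> (nat \<Rightarrow> nat \<Rightarrow> bool) \<Rightarrow> real mat" where
  "deg_mat n E = mat n n (\<lambda>(u, v). if u = v then real (degree n E u) else 0)"

definition deformed_laplacian :: "nat \<Rightarrow> (nat \<Rightarrow> nat \<Rightarrow> bool) \<Rightarrow> real \<Rightarrow> real mat" where
  "deformed_laplacian n E s =
     1\<^sub>m n - s \<cdot>\<^sub>m adj_mat n E + (s^2) \<cdot>\<^sub>m (deg_mat n E - 1\<^sub>m n)"

definition spec :: "real mat \<Rightarrow> complex multiset" where
  "spec M = proots (char_poly (map_mat complex_of_real M))"

text \<open>The vertex v of G_i is represented by offset i + v, offset i = sum of ns j, j < i
  (this realises the disjoint union of the vertex sets).\<close>
definition offset :: "(nat \<Rightarrow> nat) \<Rightarrow> nat \<Rightarrow> nat" where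
  "offset ns i = (\<Sum>j<i. ns j)"

definition hjoin_order :: "nat \<Rightarrow> (nat \<Rightarrow> nat) \<Rightarrow> nat" where
  "hjoin_order r ns = (\<Sum>j<r. ns j)"

definition hjoin_edges ::
  "nat \<Rightarrow> (nat \<Rightarrow> nat \<Rightarrow> bool) \<Rightarrow> (nat \<Rightarrow> nat) \<Rightarrow> (nat \<Rightarrow> nat \<Rightarrow> nat \<Rightarrow> bool)
     \<Rightarrow> nat \<Rightarrow> nat \<Rightarrow> bool" where
  "hjoin_edges r H ns Es x y \<longleftrightarrow>
     (\<exists>i j u v. i < r \<and> j < r \<and> u < ns i \<and> v < ns j \<and>
        x = offset ns i + u \<and> y = offset ns j + v \<and>
        ((i = j \<and> Es i u v) \<or> (i \<noteq> j \<and> H i j)))"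

text \<open>The path P_3 on vertices 0 - 1 - 2 (the paper's 1 - 2 - 3).\<close>
definition P3 :: "nat \<Rightarrow> nat \<Rightarrow> bool" where
  "P3 i j \<longleftrightarrow> {i, j} = {0, 1} \<or> {i, j} = {1, 2}"

end

theory Submission
  imports Defs "Jordan_Normal_Form.Schur_Decomposition"
begin

(* Since every G_i is d_i-regular, the vertex sets of the G_i form an equitable partition of
   M_G(s): the diagonal block on G_i is M_i(s) = c_i I - s A(G_i), with constant row sum
   beta_i = c_i - s d_i, and every off-diagonal block is constant.  Conjugating by the unipotent
   matrix that adds the columns of each block into the column of its first vertex, and then listing
   these first vertices first, makes the matrix block upper triangular: the quotient matrix Q sits
   in the corner, followed by one matrix R_i of size n_i - 1 per block.  The same argument for a
   single block gives char M_i = (x - beta_i) char R_i, hence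
   char M_G * prod_i (x - beta_i) = char Q * prod_i char M_i.
   For H = P_3 with d_1 = d_3 we get beta_1 = beta_3 = a, beta_2 = b and
   char Q = (x - a) ((x - a)(x - b) - s^2 n_2 (n_1 + n_3)); cancelling x - a and passing to complex
   roots gives the multiset identity. *)

section \<open>Characteristic polynomials under similarity and block structure\<close>

lemma char_poly_conj_square_zero:
  fixes A E :: "'a :: comm_ring_1 mat"
  assumes A: "A \<in> carrier_mat n n" and E: "E \<in> carrier_mat n n" and EE: "E * E = 0\<^sub>m n n"
  shows "char_poly ((1\<^sub>m n - E) * A * (1\<^sub>m n + E)) = char_poly A"
proof -
  have cancel: "1\<^sub>m n + E - E = 1\<^sub>m n" "1\<^sub>m n - E + E = 1\<^sub>m n"
    using E by auto
  have inv1: "(1\<^sub>m n - E) * (1\<^sub>m n + E) = 1\<^sub>m n"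
    using E EE cancel by (simp add: minus_mult_distrib_mat[of _ n n _ _ n] mult_add_distrib_mat[of _ n n _ n])
  have inv2: "(1\<^sub>m n + E) * (1\<^sub>m n - E) = 1\<^sub>m n"
    using E EE cancel by (simp add: add_mult_distrib_mat[of _ n n _ _ n] mult_minus_distrib_mat[of _ n n _ n])
  have "similar_mat_wit ((1\<^sub>m n - E) * A * (1\<^sub>m n + E)) A (1\<^sub>m n - E) (1\<^sub>m n + E)"
    unfolding similar_mat_wit_def Let_def using A E inv1 inv2 by auto
  then show ?thesis
    by (intro char_poly_similar) (auto simp: similar_mat_def)
qed

(* Conjugation by 1 + E, where E x y = 1 iff y = f x \<noteq> x, adds every column into the column of
   its class representative f y and subtracts the representative's row from every other row;
   E * E = 0 because f is idempotent. *)
lemma char_poly_fold_classes: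
  fixes M :: "'a :: comm_ring_1 mat"
  assumes M: "M \<in> carrier_mat n n" and f: "\<And>x. x < n \<Longrightarrow> f x < n \<and> f (f x) = f x"
  defines "Y \<equiv> \<lambda>x y. M $$ (x, y) + (\<Sum>k<n. if f k = y \<and> k \<noteq> y then M $$ (x, k) else 0)"
  shows "char_poly M = char_poly (mat n n (\<lambda>(x, y). Y x y - (if f x \<noteq> x then Y (f x) y else 0)))"
proof -
  define E :: "'a mat" where "E = mat n n (\<lambda>(x, y). if y = f x \<and> y \<noteq> x then 1 else 0)"
  have E: "E \<in> carrier_mat n n"
    by (simp add: E_def)
  have "E * E = 0\<^sub>m n n"
  proof (rule eq_matI)
    fix x y assume "x < dim_row (0\<^sub>m n n :: 'a mat)" "y < dim_col (0\<^sub>m n n :: 'a mat)"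
    then show "(E * E) $$ (x, y) = 0\<^sub>m n n $$ (x, y)"
      using f by (auto simp: E_def scalar_prod_def intro!: sum.neutral)
  qed (simp_all add: E_def)
  then have "char_poly M = char_poly ((1\<^sub>m n - E) * M * (1\<^sub>m n + E))"
    by (simp add: char_poly_conj_square_zero[OF M E])
  also have "(1\<^sub>m n - E) * M * (1\<^sub>m n + E) = mat n n (\<lambda>(x, y). Y x y - (if f x \<noteq> x then Y (f x) y else 0))"
    (is "_ = ?N")
  proof -
    have delta: "(\<Sum>k<n. if k \<noteq> x \<and> k = f x then c else 0) = (if f x \<noteq> x then c else 0)"
      if "x < n" for x and c :: 'a
      using f[OF that] by (subst sum.cong[OF refl, of _ _ "\<lambda>k. if k = f x \<and> f x \<noteq> x then c else 0"]) auto
    have "M * (1\<^sub>m n + E) = mat n n (\<lambda>(x, y). Y x y)"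
    proof (rule eq_matI)
      fix x y assume "x < dim_row (mat n n (\<lambda>(x, y). Y x y))" "y < dim_col (mat n n (\<lambda>(x, y). Y x y))"
      then show "(M * (1\<^sub>m n + E)) $$ (x, y) = mat n n (\<lambda>(x, y). Y x y) $$ (x, y)"
        using M by (auto simp: E_def Y_def scalar_prod_def atLeast0LessThan distrib_left sum.distrib
            if_distrib[where f = "\<lambda>a. M $$ (x, _) * a"] intro!: sum.cong cong: if_cong)
    qed (use M E in auto)
    moreover have "(1\<^sub>m n - E) * mat n n (\<lambda>(x, y). Y x y) = mat n n (\<lambda>(x, y). Y x y - (if f x \<noteq> x then Y (f x) y else 0))"
    proof (rule eq_matI)
      fix x y assume "x < dim_row ?N" "y < dim_col ?N"
      then show "((1\<^sub>m n - E) * mat n n (\<lambda>(x, y). Y x y)) $$ (x, y) = mat n n (\<lambda>(x, y). Y x y - (if f x \<noteq> x then Y (f x) y else 0)) $$ (x, y)"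
        using f by (auto simp: E_def scalar_prod_def atLeast0LessThan left_diff_distrib sum_subtractf
            if_distrib[where f = "\<lambda>a. a * Y _ y"] conj_commute delta cong: if_cong)
    qed (use E in auto)
    moreover have "(1\<^sub>m n - E) * M * (1\<^sub>m n + E) = (1\<^sub>m n - E) * (M * (1\<^sub>m n + E))"
      using M E by (intro assoc_mult_mat[of _ n n _ n _ n]) auto
    ultimately show ?thesis
      by simp
  qed
  finally show ?thesis .
qed

lemma det_permute_rows_cols:
  assumes A: "(A :: 'a :: comm_ring_1 mat) \<in> carrier_mat n n" and p: "p permutes {0..<n}"
  shows "det (mat n n (\<lambda>(i, j). A $$ (p i, p j))) = det A"
proof -
  have p_less: "p i < n" if "i < n" for i
    using permutes_in_image[OF p] that by auto
  define B where "B = mat n n (\<lambda>(i, j). A $$ (i, p j))"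
  have B: "B \<in> carrier_mat n n"
    by (simp add: B_def)
  have "mat n n (\<lambda>(i, j). A $$ (p i, p j)) = mat n n (\<lambda>(i, j). B $$ (p i, j))"
    by (rule eq_matI) (auto simp: B_def p_less)
  then have rows: "det (mat n n (\<lambda>(i, j). A $$ (p i, p j))) = signof p * det B"
    using det_permute_rows[OF B p] by simp
  have "det B = det (transpose_mat B)"
    using det_transpose[OF B] by simp
  also have "transpose_mat B = mat n n (\<lambda>(i, j). transpose_mat A $$ (p i, j))"
    using A by (intro eq_matI) (auto simp: B_def p_less)
  also have "det \<dots> = signof p * det A"
    using A det_permute_rows[OF _ p, of "transpose_mat A"] det_transpose[OF A] by simp
  finally have cols: "det B = signof p * det A" .
  have "signof p * (signof p :: 'a) = 1"
    by (simp add: sign_def flip: of_int_mult)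
  then show ?thesis
    unfolding rows cols by (simp add: mult.assoc[symmetric])
qed

lemma char_poly_permute:
  assumes A: "(A :: 'a :: comm_ring_1 mat) \<in> carrier_mat n n" and p: "p permutes {0..<n}"
  shows "char_poly (mat n n (\<lambda>(i, j). A $$ (p i, p j))) = char_poly A"
proof -
  have p_less: "p i < n" if "i < n" for i
    using permutes_in_image[OF p] that by auto
  have p_eq_iff: "p i = p j \<longleftrightarrow> i = j" for i j
    using permutes_inj[OF p] by (auto simp: inj_def)
  have "char_poly_matrix (mat n n (\<lambda>(i, j). A $$ (p i, p j))) =
      mat n n (\<lambda>(i, j). char_poly_matrix A $$ (p i, p j))"
    using A by (intro eq_matI) (auto simp: char_poly_matrix_def p_less p_eq_iff)
  then show ?thesis
    unfolding char_poly_def using det_permute_rows_cols[OF char_poly_matrix_closed[OF A] p] by simp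
qed

lemma char_poly_four_block_mat_lower_left_zero:
  assumes A1: "(A1 :: 'a :: idom mat) \<in> carrier_mat n n"
    and A2: "A2 \<in> carrier_mat n m" and A3: "A3 \<in> carrier_mat m m"
  shows "char_poly (four_block_mat A1 A2 (0\<^sub>m m n) A3) = char_poly A1 * char_poly A3"
proof -
  let ?cm = "\<lambda>A. [:0, 1:] \<cdot>\<^sub>m 1\<^sub>m (dim_row A) + map_mat (\<lambda>a. [:- a:]) A"
  let ?B2 = "map_mat (\<lambda>a. [:- a:]) A2"
  have "char_poly (four_block_mat A1 A2 (0\<^sub>m m n) A3) = det (?cm (four_block_mat A1 A2 (0\<^sub>m m n) A3))"
    unfolding char_poly_defs using A1 A3 by simp
  also have "?cm (four_block_mat A1 A2 (0\<^sub>m m n) A3) = four_block_mat (?cm A1) ?B2 (0\<^sub>m m n) (?cm A3)"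
    using A1 A2 A3 by (intro eq_matI) (auto simp: one_poly_def)
  also have "det \<dots> = det (?cm A1) * det (?cm A3)"
    using A1 A2 A3 by (intro det_four_block_mat_lower_left_zero) auto
  also have "\<dots> = char_poly A1 * char_poly A3"
    unfolding char_poly_defs ..
  finally show ?thesis .
qed

lemma char_poly_permuted_block_upper_triangular:
  assumes A: "(A :: 'a :: idom mat) \<in> carrier_mat n n" and p: "p permutes {0..<n}" and k: "k \<le> n"
    and zero: "\<And>i j. k \<le> i \<Longrightarrow> i < n \<Longrightarrow> j < k \<Longrightarrow> A $$ (p i, p j) = 0"
  shows "char_poly A = char_poly (mat k k (\<lambda>(i, j). A $$ (p i, p j))) *
    char_poly (mat (n - k) (n - k) (\<lambda>(i, j). A $$ (p (i + k), p (j + k))))"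
proof -
  let ?A1 = "mat k k (\<lambda>(i, j). A $$ (p i, p j))"
  let ?A2 = "mat k (n - k) (\<lambda>(i, j). A $$ (p i, p (j + k)))"
  let ?A3 = "mat (n - k) (n - k) (\<lambda>(i, j). A $$ (p (i + k), p (j + k)))"
  have "mat n n (\<lambda>(i, j). A $$ (p i, p j)) = four_block_mat ?A1 ?A2 (0\<^sub>m (n - k) k) ?A3"
    using k zero by (intro eq_matI) (auto simp: four_block_mat_def)
  then have "char_poly A = char_poly (four_block_mat ?A1 ?A2 (0\<^sub>m (n - k) k) ?A3)"
    using char_poly_permute[OF A p] by simp
  also have "\<dots> = char_poly ?A1 * char_poly ?A3"
    by (rule char_poly_four_block_mat_lower_left_zero) auto
  finally show ?thesis .
qed

section \<open>Block layout\<close>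

lemma offset_Suc: "offset ns (Suc j) = offset ns j + ns j"
  by (simp add: offset_def)

lemma offset_mono: "i \<le> j \<Longrightarrow> offset ns i \<le> offset ns j"
  unfolding offset_def by (rule sum_mono2) auto

lemma hjoin_order_eq_offset: "hjoin_order r ns = offset ns r"
  by (simp add: hjoin_order_def offset_def)

(* Only meaningful below the total size; beyond it, LEAST ranges over an empty set. *)
definition block_index :: "(nat \<Rightarrow> nat) \<Rightarrow> nat \<Rightarrow> nat" where
  "block_index ns x = (LEAST j. x < offset ns (Suc j))"

lemma block_index_offset_add:
  assumes "u < ns j"
  shows "block_index ns (offset ns j + u) = j"
  unfolding block_index_def
proof (rule Least_equality)
  show "offset ns j + u < offset ns (Suc j)"
    using assms by (simp add: offset_Suc)
next
  fix i assume "offset ns j + u < offset ns (Suc i)"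
  then show "j \<le> i"
    using offset_mono[of "Suc i" j ns] by (cases "j \<le> i") auto
qed

lemma offset_add_eq_iff:
  "u < ns i \<Longrightarrow> v < ns j \<Longrightarrow> offset ns i + u = offset ns j + v \<longleftrightarrow> i = j \<and> u = v"
  by (metis block_index_offset_add add_left_cancel)

lemma offset_add_less: "j < r \<Longrightarrow> u < ns j \<Longrightarrow> offset ns j + u < offset ns r"
  using offset_mono[of "Suc j" r ns] by (simp add: offset_Suc)

lemma offset_add_cases:
  assumes "x < offset ns r"
  obtains j u where "j < r" "u < ns j" "x = offset ns j + u"
  using assms
proof (induction r)
  case (Suc r)
  show ?case
  proof (cases "x < offset ns r")
    case True
    then show ?thesis using Suc.IH Suc.prems(1) less_SucI by blast
  next
    case False
    then show ?thesis
      using Suc.prems by (intro Suc.prems(1)[of r "x - offset ns r"]) (auto simp: offset_Suc)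
  qed
qed (simp add: offset_def)

lemma sum_lessThan_add: "(\<Sum>x<(a::nat) + b. g x) = (\<Sum>x<a. g x) + (\<Sum>u<b. g (a + u))"
  by (induction b) (simp_all add: add.assoc)

lemma sum_offset_blocks: "(\<Sum>x<offset ns r. g x) = (\<Sum>j<r. \<Sum>u<ns j. g (offset ns j + u))"
  by (induction r) (simp_all add: offset_Suc sum_lessThan_add, simp add: offset_def)

definition block_diag_mat :: "(nat \<Rightarrow> nat) \<Rightarrow> nat \<Rightarrow> (nat \<Rightarrow> nat \<Rightarrow> nat \<Rightarrow> 'a :: zero) \<Rightarrow> 'a mat"
  where "block_diag_mat ns r R = mat (offset ns r) (offset ns r) (\<lambda>(x, y).
     if block_index ns x = block_index ns y
     then R (block_index ns x) (x - offset ns (block_index ns x)) (y - offset ns (block_index ns y))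
     else 0)"

lemma block_diag_mat_offset_add:
  "i < r \<Longrightarrow> j < r \<Longrightarrow> u < ns i \<Longrightarrow> v < ns j \<Longrightarrow>
   block_diag_mat ns r R $$ (offset ns i + u, offset ns j + v) = (if i = j then R i u v else 0)"
  by (auto simp: block_diag_mat_def offset_add_less block_index_offset_add)

lemma block_diag_mat_carrier: "block_diag_mat ns r R \<in> carrier_mat (offset ns r) (offset ns r)"
  by (simp add: block_diag_mat_def)

lemma char_poly_block_diag_mat:
  "char_poly (block_diag_mat ns r R :: 'a :: idom mat) = (\<Prod>j<r. char_poly (mat (ns j) (ns j) (\<lambda>(u, v). R j u v)))"
proof (induction r)
  case 0
  then show ?case
    by (simp add: char_poly_def block_diag_mat_def offset_def)
next
  case (Suc r)
  let ?D = "block_diag_mat ns r R" and ?R = "mat (ns r) (ns r) (\<lambda>(u, v). R r u v)"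
  let ?B = "four_block_mat ?D (0\<^sub>m (offset ns r) (ns r)) (0\<^sub>m (ns r) (offset ns r)) ?R"
  have "block_diag_mat ns (Suc r) R = ?B"
  proof (rule eq_matI)
    fix x y assume "x < dim_row ?B" "y < dim_col ?B"
    have D: "dim_row ?D = offset ns r" "dim_col ?D = offset ns r"
      using block_diag_mat_carrier by blast+
    then have xy: "x < offset ns r + ns r" "y < offset ns r + ns r"
      using \<open>x < dim_row ?B\<close> \<open>y < dim_col ?B\<close> by simp_all
    then obtain i u j v where "i < Suc r" "u < ns i" "x = offset ns i + u"
      and "j < Suc r" "v < ns j" "y = offset ns j + v"
      by (metis offset_add_cases offset_Suc)
    then show "block_diag_mat ns (Suc r) R $$ (x, y) = ?B $$ (x, y)"
      using D xy by (auto simp: block_diag_mat_offset_add offset_add_less less_Suc_eq)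
  qed (auto simp: block_diag_mat_def offset_Suc)
  then show ?case
    using Suc.IH by (simp add: char_poly_four_block_mat_lower_left_zero[of _ "offset ns r" _ "ns r"] block_diag_mat_def)
qed

section \<open>Equitable block matrices\<close>

lemma char_poly_1x1: "char_poly (mat 1 1 (\<lambda>_. a)) = [:- a, 1:]"
  by (simp add: char_poly_def char_poly_matrix_def det_single)

locale equitable_blocks =
  fixes r :: nat and ns :: "nat \<Rightarrow> nat" and M :: "'a :: idom mat"
    and B :: "nat \<Rightarrow> nat \<Rightarrow> nat \<Rightarrow> 'a" and C :: "nat \<Rightarrow> nat \<Rightarrow> 'a" and \<beta> :: "nat \<Rightarrow> 'a"
  assumes M_carrier: "M \<in> carrier_mat (offset ns r) (offset ns r)"
    and blocks_nonempty: "\<And>j. j < r \<Longrightarrow> 0 < ns j"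
    and M_offset_add: "\<And>i j u v. i < r \<Longrightarrow> j < r \<Longrightarrow> u < ns i \<Longrightarrow> v < ns j \<Longrightarrow>
      M $$ (offset ns i + u, offset ns j + v) = (if i = j then B i u v else C i j)"
    and block_row_sum: "\<And>i u. i < r \<Longrightarrow> u < ns i \<Longrightarrow> (\<Sum>v<ns i. B i u v) = \<beta> i"
begin

definition quotient_mat :: "'a mat" where
  "quotient_mat = mat r r (\<lambda>(i, j). if i = j then \<beta> i else of_nat (ns j) * C i j)"

definition block_rep :: "nat \<Rightarrow> nat" where
  "block_rep x = offset ns (block_index ns x)"

lemma block_rep_offset_add: "u < ns j \<Longrightarrow> block_rep (offset ns j + u) = offset ns j"
  by (simp add: block_rep_def block_index_offset_add)

lemma offset_eq_offset_add_iff: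
  "j' < r \<Longrightarrow> v < ns j \<Longrightarrow> offset ns j' = offset ns j + v \<longleftrightarrow> j' = j \<and> v = 0"
  using offset_add_eq_iff[of 0 ns j' v j] blocks_nonempty by auto

definition folded_col :: "nat \<Rightarrow> nat \<Rightarrow> 'a" where
  "folded_col x y = M $$ (x, y) + (\<Sum>k<offset ns r. if block_rep k = y \<and> k \<noteq> y then M $$ (x, k) else 0)"

lemma folded_col_offset_add:
  assumes "i < r" "j < r" "u < ns i" "v < ns j"
  shows "folded_col (offset ns i + u) (offset ns j + v) =
    (if v = 0 then quotient_mat $$ (i, j) else M $$ (offset ns i + u, offset ns j + v))"
proof -
  let ?x = "offset ns i + u"
  have "(\<Sum>k<offset ns r. if block_rep k = offset ns j + v \<and> k \<noteq> offset ns j + v then M $$ (?x, k) else 0)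
      = (\<Sum>j'<r. \<Sum>w<ns j'. if offset ns j' = offset ns j + v \<and> offset ns j' + w \<noteq> offset ns j + v
           then M $$ (?x, offset ns j' + w) else 0)"
    by (simp add: sum_offset_blocks block_rep_offset_add cong: sum.cong_simp)
  also have "\<dots> = (\<Sum>j'<r. if j' = j \<and> v = 0
      then (\<Sum>w<ns j. if w \<noteq> 0 then M $$ (?x, offset ns j + w) else 0) else 0)"
    using assms(4) by (intro sum.cong refl) (auto simp: offset_eq_offset_add_iff intro!: sum.cong)
  also have "\<dots> = (if v = 0 then (\<Sum>w<ns j. if w \<noteq> 0 then M $$ (?x, offset ns j + w) else 0) else 0)"
    using assms(2) by simp
  finally have sum: "folded_col ?x (offset ns j + v) = M $$ (?x, offset ns j + v) + \<dots>"
    by (simp add: folded_col_def)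
  show ?thesis
  proof (cases "v = 0")
    case True
    have "folded_col ?x (offset ns j) = (\<Sum>w<ns j. M $$ (?x, offset ns j + w))"
      using sum True assms(4) sum.remove[of "{..<ns j}" 0 "\<lambda>w. M $$ (?x, offset ns j + w)"]
      by (simp add: sum.If_cases Diff_eq Compl_eq flip: Collect_neg_eq)
    also have "\<dots> = (\<Sum>w<ns j. if i = j then B i u w else C i j)"
      using assms by (intro sum.cong) (simp_all add: M_offset_add)
    also have "\<dots> = quotient_mat $$ (i, j)"
      using assms by (auto simp: quotient_mat_def block_row_sum)
    finally show ?thesis
      using True by simp
  qed (use sum in simp)
qed

lemma block_rep_less: "x < offset ns r \<Longrightarrow> block_rep x < offset ns r \<and> block_rep (block_rep x) = block_rep x"
  by (metis offset_add_cases block_rep_offset_add blocks_nonempty offset_add_less add_0_right)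

definition folded_mat :: "'a mat" where
  "folded_mat = mat (offset ns r) (offset ns r) (\<lambda>(x, y).
     folded_col x y - (if block_rep x \<noteq> x then folded_col (block_rep x) y else 0))"

lemma char_poly_folded_mat: "char_poly M = char_poly folded_mat"
  unfolding folded_mat_def folded_col_def by (rule char_poly_fold_classes[OF M_carrier block_rep_less])

lemma folded_mat_rep_col:
  assumes "i < r" "j < r" "u < ns i"
  shows "folded_mat $$ (offset ns i + u, offset ns j) = (if u = 0 then quotient_mat $$ (i, j) else 0)"
  using assms blocks_nonempty[of j] blocks_nonempty[of i] offset_add_less[of i r u ns] offset_add_less[of j r 0 ns]
  by (simp add: folded_mat_def block_rep_offset_add folded_col_offset_add[where v = 0, simplified]
      folded_col_offset_add[where u = 0 and v = 0, simplified])

lemma folded_mat_nonrep: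
  assumes "i < r" "j < r" "0 < u" "u < ns i" "0 < v" "v < ns j"
  shows "folded_mat $$ (offset ns i + u, offset ns j + v) = (if i = j then B i u v - B i 0 v else 0)"
proof -
  have "folded_mat $$ (offset ns i + u, offset ns j + v)
      = folded_col (offset ns i + u) (offset ns j + v) - folded_col (offset ns i + 0) (offset ns j + v)"
    using assms offset_add_less[of i r u ns] offset_add_less[of j r v ns]
    by (simp add: folded_mat_def block_rep_offset_add)
  also have "\<dots> = M $$ (offset ns i + u, offset ns j + v) - M $$ (offset ns i + 0, offset ns j + v)"
    using assms folded_col_offset_add[of i j 0 v] folded_col_offset_add[of i j u v] blocks_nonempty[of i]
    by simp
  finally show ?thesis
    using assms M_offset_add[of i j 0 v] M_offset_add[of i j u v] blocks_nonempty[of i] by simp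
qed

definition reduced_size :: "nat \<Rightarrow> nat" where
  "reduced_size j = ns j - 1"

lemma Suc_less_if_less_reduced_size: "w < reduced_size j \<Longrightarrow> Suc w < ns j"
  by (simp add: reduced_size_def)

lemma offset_eq_reduced: "k \<le> r \<Longrightarrow> offset ns k = k + offset reduced_size k"
proof (induction k)
  case (Suc k)
  then show ?case
    using blocks_nonempty[of k] by (simp add: offset_Suc reduced_size_def)
qed (simp add: offset_def)

(* Lists the first vertex of every block, then the remaining vertices block by block. *)
definition reorder :: "nat \<Rightarrow> nat" where
  "reorder t = (if t < r then offset ns t
     else if t < offset ns r then
       offset ns (block_index reduced_size (t - r))
         + Suc (t - r - offset reduced_size (block_index reduced_size (t - r)))
     else t)"

lemma reorder_less: "i < r \<Longrightarrow> reorder i = offset ns i"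
  by (simp add: reorder_def)

lemma reorder_offset_add:
  assumes "j < r" "w < reduced_size j"
  shows "reorder (offset reduced_size j + w + r) = offset ns j + Suc w"
  using assms offset_add_less[of j r w reduced_size] offset_eq_reduced[of r]
  by (simp add: reorder_def block_index_offset_add)

lemma reorder_cases:
  assumes "t < offset ns r"
  obtains (rep) "t < r"
  | (nonrep) j w where "j < r" "w < reduced_size j" "t = offset reduced_size j + w + r"
proof (cases "t < r")
  case False
  then have "t - r < offset reduced_size r"
    using assms offset_eq_reduced[of r] by simp
  then show ?thesis
    using False by (metis offset_add_cases le_add_diff_inverse2 not_less nonrep)
qed

lemma reorder_less_offset:
  assumes "t < offset ns r"
  shows "reorder t < offset ns r"
  using assms
proof (cases rule: reorder_cases)
  case rep
  then show ?thesis
    using offset_add_less[of t r 0 ns] blocks_nonempty[of t] by (simp add: reorder_less)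
next
  case (nonrep j w)
  then show ?thesis
    using offset_add_less[of j r "Suc w" ns] by (simp add: reorder_offset_add reduced_size_def)
qed

lemma reorder_inj: "inj_on reorder {0..<offset ns r}"
proof (rule inj_onI)
  fix t t' assume "t \<in> {0..<offset ns r}" "t' \<in> {0..<offset ns r}" and eq: "reorder t = reorder t'"
  then have t: "t < offset ns r" and t': "t' < offset ns r"
    by simp_all
  note simps = reorder_less reorder_offset_add reduced_size_def
  from t show "t = t'"
  proof (cases rule: reorder_cases)
    case rep
    from t' show ?thesis
    proof (cases rule: reorder_cases)
      case rep
      then show ?thesis
        using \<open>t < r\<close> eq offset_add_eq_iff[of 0 ns t 0 t'] blocks_nonempty by (simp add: simps)
    next
      case (nonrep j w)
      then show ?thesis
        using \<open>t < r\<close> eq offset_eq_offset_add_iff[of t "Suc w" j] Suc_less_if_less_reduced_size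
        by (simp add: simps)
    qed
  next
    case (nonrep j w)
    from t' show ?thesis
    proof (cases rule: reorder_cases)
      case rep
      then show ?thesis
        using nonrep eq offset_eq_offset_add_iff[of t' "Suc w" j] Suc_less_if_less_reduced_size
        by (simp add: simps)
    next
      case (nonrep j' w')
      then show ?thesis
        using \<open>j < r\<close> \<open>w < reduced_size j\<close> \<open>t = offset reduced_size j + w + r\<close> eq
          offset_add_eq_iff[of "Suc w" ns j "Suc w'" j'] Suc_less_if_less_reduced_size
        by (simp add: simps)
    qed
  qed
qed

lemma reorder_permutes: "reorder permutes {0..<offset ns r}"
proof (rule bij_imp_permutes)
  have "reorder ` {0..<offset ns r} = {0..<offset ns r}"
    using reorder_less_offset reorder_inj by (intro endo_inj_surj) auto
  then show "bij_betw reorder {0..<offset ns r} {0..<offset ns r}"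
    using reorder_inj by (simp add: bij_betw_def)
qed (use offset_eq_reduced[of r] in \<open>simp add: reorder_def\<close>)

theorem char_poly_eq_quotient_mult:
  "char_poly M = char_poly quotient_mat *
     (\<Prod>j<r. char_poly (mat (ns j - 1) (ns j - 1) (\<lambda>(u, v). B j (Suc u) (Suc v) - B j 0 (Suc v))))"
proof -
  let ?n = "offset ns r" and ?N = folded_mat
  let ?R = "\<lambda>j u v. B j (Suc u) (Suc v) - B j 0 (Suc v)"
  have n: "?n - r = offset reduced_size r"
    using offset_eq_reduced[of r] by simp
  have split: "char_poly ?N = char_poly (mat r r (\<lambda>(i, j). ?N $$ (reorder i, reorder j))) *
     char_poly (mat (?n - r) (?n - r) (\<lambda>(i, j). ?N $$ (reorder (i + r), reorder (j + r))))"
  proof (rule char_poly_permuted_block_upper_triangular[OF _ reorder_permutes])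
    show "?N \<in> carrier_mat ?n ?n" "r \<le> ?n"
      using offset_eq_reduced[of r] by (simp_all add: folded_mat_def)
    fix t j assume "r \<le> t" "t < ?n" "j < r"
    from \<open>t < ?n\<close> show "?N $$ (reorder t, reorder j) = 0"
    proof (cases rule: reorder_cases)
      case (nonrep i w)
      then show ?thesis
        using \<open>j < r\<close> folded_mat_rep_col[of i j "Suc w"] Suc_less_if_less_reduced_size
        by (simp add: reorder_less reorder_offset_add)
    qed (use \<open>r \<le> t\<close> in simp)
  qed
  have top_left: "mat r r (\<lambda>(i, j). ?N $$ (reorder i, reorder j)) = quotient_mat"
    using folded_mat_rep_col[of _ _ 0] blocks_nonempty
    by (intro eq_matI) (simp_all add: reorder_less quotient_mat_def)
  have bottom_right: "mat (?n - r) (?n - r) (\<lambda>(i, j). ?N $$ (reorder (i + r), reorder (j + r)))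
      = block_diag_mat reduced_size r ?R"
  proof (rule eq_matI)
    fix a b assume "a < dim_row (block_diag_mat reduced_size r ?R)" "b < dim_col (block_diag_mat reduced_size r ?R)"
    then have a: "a < offset reduced_size r" and b: "b < offset reduced_size r"
      by (simp_all add: block_diag_mat_def)
    obtain i w where "i < r" "w < reduced_size i" "a = offset reduced_size i + w"
      using a by (rule offset_add_cases)
    moreover obtain j w' where "j < r" "w' < reduced_size j" "b = offset reduced_size j + w'"
      using b by (rule offset_add_cases)
    ultimately
    show "mat (?n - r) (?n - r) (\<lambda>(i, j). ?N $$ (reorder (i + r), reorder (j + r))) $$ (a, b)
        = block_diag_mat reduced_size r ?R $$ (a, b)"
      using folded_mat_nonrep[of i j "Suc w" "Suc w'"] Suc_less_if_less_reduced_size a b n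
      by (simp add: reorder_offset_add block_diag_mat_offset_add)
  qed (simp_all add: n block_diag_mat_def)
  show ?thesis
    unfolding char_poly_folded_mat split top_left bottom_right char_poly_block_diag_mat
    by (simp add: reduced_size_def)
qed

lemma char_poly_diagonal_block:
  assumes "j < r"
  shows "char_poly (mat (ns j) (ns j) (\<lambda>(u, v). B j u v)) = [:- \<beta> j, 1:] *
    char_poly (mat (ns j - 1) (ns j - 1) (\<lambda>(u, v). B j (Suc u) (Suc v) - B j 0 (Suc v)))"
proof -
  interpret single: equitable_blocks 1 "\<lambda>_. ns j" "mat (ns j) (ns j) (\<lambda>(u, v). B j u v)"
    "\<lambda>_. B j" "\<lambda>_ _. 0" "\<lambda>_. \<beta> j"
    using assms blocks_nonempty block_row_sum by unfold_locales (simp_all add: offset_def)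
  have "single.quotient_mat = mat 1 1 (\<lambda>_. \<beta> j)"
    unfolding single.quotient_mat_def by (rule eq_matI) auto
  then have "char_poly single.quotient_mat = [:- \<beta> j, 1:]"
    by (simp only: char_poly_1x1)
  then show ?thesis
    using single.char_poly_eq_quotient_mult by simp
qed

theorem char_poly_mult_eq_quotient:
  "char_poly M * (\<Prod>j<r. [:- \<beta> j, 1:]) =
     char_poly quotient_mat * (\<Prod>j<r. char_poly (mat (ns j) (ns j) (\<lambda>(u, v). B j u v)))"
proof -
  have "(\<Prod>j<r. char_poly (mat (ns j) (ns j) (\<lambda>(u, v). B j u v))) = (\<Prod>j<r. [:- \<beta> j, 1:] *
      char_poly (mat (ns j - 1) (ns j - 1) (\<lambda>(u, v). B j (Suc u) (Suc v) - B j 0 (Suc v))))"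
    by (rule prod.cong) (simp_all add: char_poly_diagonal_block)
  then show ?thesis
    by (simp only: char_poly_eq_quotient_mult prod.distrib mult_ac)
qed

end

section \<open>The deformed Laplacian of a join of regular graphs\<close>

lemma hjoin_edges_offset_add:
  assumes "i < r" "j < r" "u < ns i" "v < ns j"
  shows "hjoin_edges r H ns Es (offset ns i + u) (offset ns j + v) \<longleftrightarrow> (if i = j then Es i u v else H i j)"
  using assms by (auto simp: hjoin_edges_def offset_add_eq_iff)

lemma card_less_eq_sum: "card {x. x < (n :: nat) \<and> P x} = (\<Sum>x<n. if P x then 1 else 0)"
proof -
  have "card {x \<in> {..<n}. P x} = (\<Sum>x<n. if P x then 1 else 0)"
    unfolding card_eq_sum by (subst sum.inter_filter) simp_all
  also have "{x \<in> {..<n}. P x} = {x. x < n \<and> P x}"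
    by auto
  finally show ?thesis .
qed

definition hjoin_outer_degree :: "nat \<Rightarrow> (nat \<Rightarrow> nat \<Rightarrow> bool) \<Rightarrow> (nat \<Rightarrow> nat) \<Rightarrow> nat \<Rightarrow> nat" where
  "hjoin_outer_degree r H ns i = (\<Sum>j | j < r \<and> j \<noteq> i \<and> H i j. ns j)"

lemma degree_hjoin_offset_add:
  assumes "i < r" "u < ns i" and reg: "regular (ns i) (Es i) (d i)"
  shows "degree (hjoin_order r ns) (hjoin_edges r H ns Es) (offset ns i + u) = d i + hjoin_outer_degree r H ns i"
proof -
  let ?E = "hjoin_edges r H ns Es"
  have "degree (hjoin_order r ns) ?E (offset ns i + u) = (\<Sum>j<r. \<Sum>v<ns j. if ?E (offset ns i + u) (offset ns j + v) then 1 else 0)"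
    by (simp add: degree_def hjoin_order_eq_offset card_less_eq_sum sum_offset_blocks)
  also have "\<dots> = (\<Sum>j<r. (if j = i then d i else 0) + (if j \<noteq> i \<and> H i j then ns j else 0))"
  proof (rule sum.cong)
    fix j assume "j \<in> {..<r}"
    then show "(\<Sum>v<ns j. if ?E (offset ns i + u) (offset ns j + v) then 1 else 0)
        = (if j = i then d i else 0) + (if j \<noteq> i \<and> H i j then ns j else 0)"
      using assms reg by (auto simp: hjoin_edges_offset_add regular_def degree_def card_less_eq_sum)
  qed simp
  also have "\<dots> = d i + hjoin_outer_degree r H ns i"
    using assms by (simp add: sum.distrib hjoin_outer_degree_def sum.inter_restrict Collect_conj_eq flip: lessThan_def)
  finally show ?thesis .
qed

lemma deformed_laplacian_carrier: "deformed_laplacian n E s \<in> carrier_mat n n"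
  unfolding deformed_laplacian_def adj_mat_def deg_mat_def
  by (intro add_carrier_mat minus_carrier_mat smult_carrier_mat one_carrier_mat mat_carrier)

locale regular_hjoin =
  fixes r :: nat and H :: "nat \<Rightarrow> nat \<Rightarrow> bool" and ns :: "nat \<Rightarrow> nat"
    and Es :: "nat \<Rightarrow> nat \<Rightarrow> nat \<Rightarrow> bool" and d :: "nat \<Rightarrow> nat" and s :: real
  assumes graphs: "\<And>i. i < r \<Longrightarrow> simple_graph (ns i) (Es i)"
    and nonempty: "\<And>i. i < r \<Longrightarrow> 0 < ns i"
    and reg: "\<And>i. i < r \<Longrightarrow> regular (ns i) (Es i) (d i)"
begin

definition hjoin_block_shift :: "nat \<Rightarrow> real" where
  "hjoin_block_shift i = s^2 * (real (d i) + real (hjoin_outer_degree r H ns i) - 1) + 1"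

(* The paper's M_i(s), the diagonal block of M_G(s) on the vertices of G_i. *)
definition hjoin_block :: "nat \<Rightarrow> real mat" where
  "hjoin_block i = hjoin_block_shift i \<cdot>\<^sub>m 1\<^sub>m (ns i) - s \<cdot>\<^sub>m adj_mat (ns i) (Es i)"

lemma hjoin_block_carrier: "hjoin_block i \<in> carrier_mat (ns i) (ns i)"
  unfolding hjoin_block_def adj_mat_def by (intro minus_carrier_mat) auto

lemma deformed_laplacian_hjoin_offset_add:
  assumes "i < r" "j < r" "u < ns i" "v < ns j"
  shows "deformed_laplacian (hjoin_order r ns) (hjoin_edges r H ns Es) s $$ (offset ns i + u, offset ns j + v)
    = (if i = j then hjoin_block i $$ (u, v) else if H i j then - s else 0)"
proof -
  let ?n = "hjoin_order r ns" and ?E = "hjoin_edges r H ns Es"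
  let ?x = "offset ns i + u" and ?y = "offset ns j + v"
  have "?x < ?n" "?y < ?n"
    using assms offset_add_less[of i r u ns] offset_add_less[of j r v ns] by (simp_all add: hjoin_order_eq_offset)
  then have "deformed_laplacian ?n ?E s $$ (?x, ?y) = (if ?x = ?y then 1 else 0) - s * (if ?E ?x ?y then 1 else 0)
      + s^2 * ((if ?x = ?y then real (degree ?n ?E ?x) else 0) - (if ?x = ?y then 1 else 0))"
    by (simp add: deformed_laplacian_def adj_mat_def deg_mat_def)
  moreover have "?x = ?y \<longleftrightarrow> i = j \<and> u = v"
    using assms by (simp add: offset_add_eq_iff)
  moreover have "?E ?x ?y \<longleftrightarrow> (if i = j then Es i u v else H i j)"
    using assms by (rule hjoin_edges_offset_add)
  moreover have "degree ?n ?E ?x = d i + hjoin_outer_degree r H ns i"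
    using assms(1,3) reg[OF assms(1)] by (rule degree_hjoin_offset_add)
  moreover have "\<not> Es i u u"
    using graphs[OF assms(1)] by (simp add: simple_graph_def)
  ultimately show ?thesis
    using assms by (cases "i = j"; cases "u = v") (simp_all add: hjoin_block_def hjoin_block_shift_def adj_mat_def)
qed

lemma hjoin_block_row_sum:
  assumes "i < r" "u < ns i"
  shows "(\<Sum>v<ns i. hjoin_block i $$ (u, v)) = hjoin_block_shift i - s * real (d i)"
proof -
  have "real (d i) = real (\<Sum>v<ns i. if Es i u v then 1 else 0)"
    using assms reg[OF assms(1)] by (simp add: regular_def degree_def card_less_eq_sum)
  also have "\<dots> = (\<Sum>v<ns i. if Es i u v then 1 else 0)"
    unfolding of_nat_sum by (rule sum.cong) simp_all
  finally have deg: "(\<Sum>v<ns i. if Es i u v then 1 else 0) = real (d i)" ..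
  have "(\<Sum>v<ns i. hjoin_block i $$ (u, v))
      = (\<Sum>v<ns i. (if u = v then hjoin_block_shift i else 0) - s * (if Es i u v then 1 else 0))"
    using assms by (intro sum.cong) (auto simp: hjoin_block_def adj_mat_def)
  also have "\<dots> = hjoin_block_shift i - s * real (d i)"
    using assms by (simp add: sum_subtractf flip: sum_distrib_left deg)
  finally show ?thesis .
qed

theorem char_poly_hjoin_deformed_laplacian:
  "char_poly (deformed_laplacian (hjoin_order r ns) (hjoin_edges r H ns Es) s) *
     (\<Prod>i<r. [:- (hjoin_block_shift i - s * real (d i)), 1:]) =
   char_poly (mat r r (\<lambda>(i, j). if i = j then hjoin_block_shift i - s * real (d i)
                                else real (ns j) * (if H i j then - s else 0))) *
     (\<Prod>i<r. char_poly (hjoin_block i))"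
proof -
  interpret equitable_blocks r ns "deformed_laplacian (hjoin_order r ns) (hjoin_edges r H ns Es) s"
    "\<lambda>i u v. hjoin_block i $$ (u, v)" "\<lambda>i j. if H i j then - s else 0" "\<lambda>i. hjoin_block_shift i - s * real (d i)"
    by unfold_locales (simp_all add: deformed_laplacian_carrier nonempty hjoin_order_eq_offset[of r ns, symmetric]
        deformed_laplacian_hjoin_offset_add hjoin_block_row_sum)
  have "mat (ns i) (ns i) (\<lambda>(u, v). hjoin_block i $$ (u, v)) = hjoin_block i" for i
    by (rule eq_matI) (auto simp: hjoin_block_def adj_mat_def)
  then show ?thesis
    using char_poly_mult_eq_quotient by (simp add: quotient_mat_def)
qed

end

section \<open>Spectra\<close>

lemma proots_prod_list_linear: "proots (\<Prod>a\<leftarrow>xs. [:- a, 1:]) = mset (xs :: 'a :: idom list)"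
proof (induction xs)
  case (Cons a xs)
  have "proots (\<Prod>b\<leftarrow>a # xs. [:- b, 1:]) = proots [:- a, 1:] + proots (\<Prod>b\<leftarrow>xs. [:- b, 1:])"
    by (simp only: list.map prod_list.Cons, rule proots_mult) auto
  then show ?case
    using Cons by simp
qed simp

lemma similar_mat_wit_affine:
  fixes A :: "'a :: comm_ring_1 mat"
  assumes AB: "similar_mat_wit A B P Q" and A: "A \<in> carrier_mat n n"
  shows "similar_mat_wit (c \<cdot>\<^sub>m 1\<^sub>m n - s \<cdot>\<^sub>m A) (c \<cdot>\<^sub>m 1\<^sub>m n - s \<cdot>\<^sub>m B) P Q"
proof -
  note wit = similar_mat_witD2[OF A AB]
  have PB: "P * (c \<cdot>\<^sub>m 1\<^sub>m n - s \<cdot>\<^sub>m B) = c \<cdot>\<^sub>m P - s \<cdot>\<^sub>m (P * B)"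
    using wit by (simp add: mult_minus_distrib_mat[of P n n _ n] mult_smult_distrib[of P n n _ n])
  have "P * (c \<cdot>\<^sub>m 1\<^sub>m n - s \<cdot>\<^sub>m B) * Q = c \<cdot>\<^sub>m (P * Q) - s \<cdot>\<^sub>m (P * B * Q)"
    using wit unfolding PB
    by (simp add: minus_mult_distrib_mat[of _ n n _ Q n] mult_smult_assoc_mat[of _ n n Q n])
  then show ?thesis
    using wit A by (intro similar_mat_witI[of P Q n]) auto
qed

lemma proots_char_poly_affine:
  fixes A :: "complex mat"
  assumes A: "A \<in> carrier_mat n n"
  shows "proots (char_poly (c \<cdot>\<^sub>m 1\<^sub>m n - s \<cdot>\<^sub>m A)) = image_mset (\<lambda>\<mu>. c - s * \<mu>) (proots (char_poly A))"
proof -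
  obtain es where es: "char_poly A = (\<Prod>a\<leftarrow>es. [:- a, 1:])"
    using char_poly_factorized[OF A] by blast
  define B where "B = schur_upper_triangular A es"
  note B = schur_upper_triangular[OF A es, folded B_def]
  then obtain P Q where "similar_mat_wit A B P Q"
    by (auto simp: similar_mat_def)
  then have "char_poly (c \<cdot>\<^sub>m 1\<^sub>m n - s \<cdot>\<^sub>m A) = char_poly (c \<cdot>\<^sub>m 1\<^sub>m n - s \<cdot>\<^sub>m B)"
    using A by (intro char_poly_similar) (auto simp: similar_mat_def dest: similar_mat_wit_affine)
  also have "\<dots> = (\<Prod>a\<leftarrow>diag_mat (c \<cdot>\<^sub>m 1\<^sub>m n - s \<cdot>\<^sub>m B). [:- a, 1:])"
    using B(1,2) by (intro char_poly_upper_triangular[of _ n]) (auto simp: upper_triangular_def)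
  also have "diag_mat (c \<cdot>\<^sub>m 1\<^sub>m n - s \<cdot>\<^sub>m B) = map (\<lambda>\<mu>. c - s * \<mu>) (diag_mat B)"
    using B(1) by (auto simp: diag_mat_def)
  finally have "proots (char_poly (c \<cdot>\<^sub>m 1\<^sub>m n - s \<cdot>\<^sub>m A)) = mset (map (\<lambda>\<mu>. c - s * \<mu>) (diag_mat B))"
    by (simp only: proots_prod_list_linear)
  moreover have "proots (char_poly A) = mset (diag_mat B)"
    using char_poly_similar[OF B(3)] char_poly_upper_triangular[OF B(1,2)] by (simp add: proots_prod_list_linear)
  ultimately show ?thesis
    by simp
qed

lemma char_poly_nonzero: "A \<in> carrier_mat n n \<Longrightarrow> char_poly (A :: 'a :: idom mat) \<noteq> 0"
  using degree_monic_char_poly[of A n] by auto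

lemma spec_eq_of_char_poly_eq:
  fixes A :: "real mat" and Bs :: "nat \<Rightarrow> real mat"
  assumes A: "A \<in> carrier_mat n n" and Bs: "\<And>i. i < k \<Longrightarrow> Bs i \<in> carrier_mat (m i) (m i)"
    and eq: "char_poly A * (\<Prod>x\<leftarrow>xs. [:- x, 1:]) = (\<Prod>y\<leftarrow>ys. [:- y, 1:]) * (\<Prod>i<k. char_poly (Bs i))"
  shows "spec A = (\<Sum>i<k. spec (Bs i)) + mset (map complex_of_real ys) - mset (map complex_of_real xs)"
proof (rule add_implies_diff)
  interpret C: map_poly_inj_idom_hom complex_of_real
    by unfold_locales auto
  have linear: "map_poly complex_of_real (\<Prod>x\<leftarrow>zs. [:- x, 1:]) = (\<Prod>x\<leftarrow>map complex_of_real zs. [:- x, 1:])" for zs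
    unfolding C.hom_prod_list by (simp add: o_def)
  have linear_nonzero: "map_poly complex_of_real (\<Prod>x\<leftarrow>zs. [:- x, 1:]) \<noteq> 0" for zs
    unfolding linear by auto
  have linear_roots: "proots (map_poly complex_of_real (\<Prod>x\<leftarrow>zs. [:- x, 1:])) = mset (map complex_of_real zs)" for zs
    unfolding linear by (rule proots_prod_list_linear)
  have of_real_char_poly: "map_poly complex_of_real (char_poly B) = char_poly (map_mat complex_of_real B)"
    if "B \<in> carrier_mat l l" for B l
    using that by (rule of_real_hom.char_poly_hom[symmetric])
  have of_real_char_poly_nonzero: "map_poly complex_of_real (char_poly B) \<noteq> 0" if "B \<in> carrier_mat l l" for B l
    using that by (simp add: of_real_char_poly char_poly_nonzero)
  have proots_of_real_char_poly: "proots (map_poly complex_of_real (char_poly B)) = spec B" if "B \<in> carrier_mat l l" for B l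
    using that by (simp add: of_real_char_poly spec_def)
  have lhs: "proots (map_poly complex_of_real (char_poly A * (\<Prod>x\<leftarrow>xs. [:- x, 1:])))
      = spec A + mset (map complex_of_real xs)"
    by (simp only: C.hom_mult proots_mult[OF of_real_char_poly_nonzero[OF A] linear_nonzero] proots_of_real_char_poly[OF A]
        linear_roots)
  have "proots (map_poly complex_of_real ((\<Prod>y\<leftarrow>ys. [:- y, 1:]) * (\<Prod>i<k. char_poly (Bs i))))
      = proots (map_poly complex_of_real (\<Prod>y\<leftarrow>ys. [:- y, 1:]) * (\<Prod>i<k. map_poly complex_of_real (char_poly (Bs i))))"
    by (simp only: C.hom_mult C.hom_prod)
  also have "\<dots> = mset (map complex_of_real ys) + (\<Sum>i<k. proots (map_poly complex_of_real (char_poly (Bs i))))"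
  proof -
    have nonzero: "\<And>i. i \<in> {..<k} \<Longrightarrow> map_poly complex_of_real (char_poly (Bs i)) \<noteq> 0"
      using Bs of_real_char_poly_nonzero by blast
    then have "(\<Prod>i<k. map_poly complex_of_real (char_poly (Bs i))) \<noteq> 0"
      by (subst prod_zero_iff) auto
    then show ?thesis
      by (subst proots_mult[OF linear_nonzero]) (simp_all only: linear_roots proots_prod[OF nonzero] simp_thms)
  qed
  also have "\<dots> = mset (map complex_of_real ys) + (\<Sum>i<k. spec (Bs i))"
    using Bs proots_of_real_char_poly by (metis (no_types, lifting) lessThan_iff sum.cong)
  finally have rhs: "proots (map_poly complex_of_real ((\<Prod>y\<leftarrow>ys. [:- y, 1:]) * (\<Prod>i<k. char_poly (Bs i))))
      = mset (map complex_of_real ys) + (\<Sum>i<k. spec (Bs i))" .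
  show "spec A + mset (map complex_of_real xs) = (\<Sum>i<k. spec (Bs i)) + mset (map complex_of_real ys)"
    using lhs rhs eq by (simp add: add.commute)
qed

lemma spec_affine:
  assumes "A \<in> carrier_mat n n"
  shows "spec (c \<cdot>\<^sub>m 1\<^sub>m n - s \<cdot>\<^sub>m A) = image_mset (\<lambda>\<mu>. complex_of_real c - complex_of_real s * \<mu>) (spec A)"
proof -
  have "map_mat complex_of_real (c \<cdot>\<^sub>m 1\<^sub>m n - s \<cdot>\<^sub>m A) = complex_of_real c \<cdot>\<^sub>m 1\<^sub>m n - complex_of_real s \<cdot>\<^sub>m map_mat complex_of_real A"
    using assms by auto
  then show ?thesis
    using assms by (simp add: spec_def proots_char_poly_affine)
qed

section \<open>The join over the path P3\<close>

lemma det_2x2: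
  assumes "(A :: 'a :: comm_ring_1 mat) \<in> carrier_mat 2 2"
  shows "det A = A $$ (0, 0) * A $$ (1, 1) - A $$ (0, 1) * A $$ (1, 0)"
proof -
  have "det A = (\<Sum>j<2. A $$ (0, j) * cofactor A 0 j)"
    using assms by (intro laplace_expansion_row) auto
  also have "\<dots> = A $$ (0, 0) * det (mat_delete A 0 0) - A $$ (0, 1) * det (mat_delete A 0 1)"
    by (simp add: cofactor_def eval_nat_numeral)
  finally show ?thesis
    using assms by (simp add: det_single mat_delete_def)
qed

lemma det_3x3:
  assumes "(A :: 'a :: comm_ring_1 mat) \<in> carrier_mat 3 3"
  shows "det A = A $$ (0, 0) * (A $$ (1, 1) * A $$ (2, 2) - A $$ (1, 2) * A $$ (2, 1))
    - A $$ (0, 1) * (A $$ (1, 0) * A $$ (2, 2) - A $$ (1, 2) * A $$ (2, 0))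
    + A $$ (0, 2) * (A $$ (1, 0) * A $$ (2, 1) - A $$ (1, 1) * A $$ (2, 0))"
proof -
  have "det A = (\<Sum>j<3. A $$ (0, j) * cofactor A 0 j)"
    using assms by (intro laplace_expansion_row) auto
  also have "\<dots> = A $$ (0, 0) * det (mat_delete A 0 0) - A $$ (0, 1) * det (mat_delete A 0 1)
      + A $$ (0, 2) * det (mat_delete A 0 2)"
    by (simp add: cofactor_def eval_nat_numeral)
  finally show ?thesis
    using assms by (simp add: det_2x2 mat_delete_def numeral_2_eq_2)
qed

lemma quadratic_factorization:
  fixes a b c S x :: "'a :: field_char_0"
  assumes "S * S = (a - b)^2 + 4 * c"
  shows "(x - (a + b + S) / 2) * (x - (a + b - S) / 2) = (x - a) * (x - b) - c"
proof -
  have "(x - (a + b + S) / 2) * (x - (a + b - S) / 2) = ((2 * x - a - b)^2 - S * S) / 4"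
    by (simp add: field_simps power2_eq_square)
  also have "\<dots> = ((2 * x - a - b)^2 - (a - b)^2 - 4 * c) / 4"
    using assms by simp
  also have "\<dots> = (x - a) * (x - b) - c"
    by (simp add: field_simps power2_eq_square)
  finally show ?thesis .
qed

lemma hjoin_outer_degree_P3:
  assumes "i < 3"
  shows "hjoin_outer_degree 3 P3 ns i = (if i = 1 then ns 0 + ns 2 else ns 1)"
proof -
  have "{j. j < 3 \<and> j \<noteq> i \<and> P3 i j} = (if i = 1 then {0, 2} else {1})"
    using assms by (auto simp: P3_def doubleton_eq_iff)
  then show ?thesis
    by (simp add: hjoin_outer_degree_def)
qed

lemma char_poly_P3_quotient:
  fixes \<beta> :: "nat \<Rightarrow> real" and s :: real and ns :: "nat \<Rightarrow> nat"
  assumes "\<beta> 2 = \<beta> 0"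
  defines "S \<equiv> sqrt ((\<beta> 0 - \<beta> 1)^2 + 4 * s^2 * real (ns 1) * real (ns 0 + ns 2))"
  shows "char_poly (mat 3 3 (\<lambda>(i, j). if i = j then \<beta> i else real (ns j) * (if P3 i j then - s else 0))) =
    [:- \<beta> 0, 1:] * [:- ((\<beta> 0 + \<beta> 1 + S) / 2), 1:] * [:- ((\<beta> 0 + \<beta> 1 - S) / 2), 1:]"
    (is "char_poly ?Q = _")
proof (rule poly_eq_poly_eq_iff[THEN iffD1, OF ext])
  fix x
  have "S * S = (\<beta> 0 - \<beta> 1)^2 + 4 * (s^2 * real (ns 1) * real (ns 0 + ns 2))"
    unfolding S_def by simp
  from quadratic_factorization[OF this, of x]
  have "poly ([:- \<beta> 0, 1:] * [:- ((\<beta> 0 + \<beta> 1 + S) / 2), 1:] * [:- ((\<beta> 0 + \<beta> 1 - S) / 2), 1:]) x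
      = (x - \<beta> 0) * ((x - \<beta> 0) * (x - \<beta> 1) - s^2 * real (ns 1) * real (ns 0 + ns 2))"
    by (simp only: poly_mult poly_pCons poly_0 mult.assoc) simp
  moreover have "poly (char_poly ?Q) x = det (- char_matrix ?Q x)"
    by (rule char_poly_matrix[of _ 3]) simp
  moreover have "det (- char_matrix ?Q x)
      = (x - \<beta> 0) * ((x - \<beta> 0) * (x - \<beta> 1) - s^2 * real (ns 1) * real (ns 0 + ns 2))"
    using assms(1) by (subst det_3x3) (auto simp: char_matrix_def P3_def doubleton_eq_iff power2_eq_square algebra_simps)
  ultimately show "poly (char_poly ?Q) x = poly ([:- \<beta> 0, 1:] * [:- ((\<beta> 0 + \<beta> 1 + S) / 2), 1:] * [:- ((\<beta> 0 + \<beta> 1 - S) / 2), 1:]) x"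
    by simp
qed

lemma prod_lessThan_3: "(\<Prod>i<(3::nat). f i) = f 0 * f 1 * f 2"
  by (simp add: eval_nat_numeral)

locale regular_P3_join = regular_hjoin 3 P3 ns Es d s for ns Es d s +
  assumes end_degrees_eq: "d 0 = d 2"
begin

lemma char_poly_P3_join:
  defines "\<alpha> \<equiv> hjoin_block_shift 0 - s * real (d 0)" and "\<beta> \<equiv> hjoin_block_shift 1 - s * real (d 1)"
  defines "S \<equiv> sqrt ((\<alpha> - \<beta>)^2 + 4 * s^2 * real (ns 1) * real (ns 0 + ns 2))"
  shows "char_poly (deformed_laplacian (hjoin_order 3 ns) (hjoin_edges 3 P3 ns Es) s) * (\<Prod>x\<leftarrow>[\<alpha>, \<beta>]. [:- x, 1:])
    = (\<Prod>y\<leftarrow>[(\<alpha> + \<beta> + S) / 2, (\<alpha> + \<beta> - S) / 2]. [:- y, 1:]) * (\<Prod>i<3. char_poly (hjoin_block i))"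
proof -
  let ?M = "deformed_laplacian (hjoin_order 3 ns) (hjoin_edges 3 P3 ns Es) s"
  let ?\<gamma> = "\<lambda>i. hjoin_block_shift i - s * real (d i)"
  have "hjoin_outer_degree 3 P3 ns 2 = hjoin_outer_degree 3 P3 ns 0"
    by (simp add: hjoin_outer_degree_P3)
  then have "?\<gamma> 2 = \<alpha>"
    by (simp add: \<alpha>_def hjoin_block_shift_def end_degrees_eq)
  then have "char_poly (mat 3 3 (\<lambda>(i, j). if i = j then ?\<gamma> i else real (ns j) * (if P3 i j then - s else 0)))
      = [:- \<alpha>, 1:] * [:- ((\<alpha> + \<beta> + S) / 2), 1:] * [:- ((\<alpha> + \<beta> - S) / 2), 1:]"
    using char_poly_P3_quotient[where \<beta> = ?\<gamma> and s = s and ns = ns] by (simp add: \<alpha>_def \<beta>_def S_def)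
  \<comment> \<open>both end blocks have row sum \<alpha>, so the factor x - \<alpha> occurs on both sides and cancels\<close>
  with char_poly_hjoin_deformed_laplacian \<open>?\<gamma> 2 = \<alpha>\<close>
  have "[:- \<alpha>, 1:] * (char_poly ?M * ([:- \<alpha>, 1:] * [:- \<beta>, 1:])) = [:- \<alpha>, 1:] *
      ([:- ((\<alpha> + \<beta> + S) / 2), 1:] * [:- ((\<alpha> + \<beta> - S) / 2), 1:] * (\<Prod>i<3. char_poly (hjoin_block i)))"
    unfolding prod_lessThan_3 \<alpha>_def[symmetric] \<beta>_def[symmetric] by (simp only: mult_ac)
  then show ?thesis
    by (simp only: mult_left_cancel pCons_eq_0_iff one_neq_zero simp_thms list.map prod_list.Cons
        prod_list.Nil mult_1_right)
qed

end

theorem mainTheorem11: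
  fixes ns :: "nat \<Rightarrow> nat" and Es :: "nat \<Rightarrow> nat \<Rightarrow> nat \<Rightarrow> bool"
    and d :: "nat \<Rightarrow> nat" and s :: real
  assumes graphs: "\<And>i. i < 3 \<Longrightarrow> simple_graph (ns i) (Es i)"
    and nonempty: "\<And>i. i < 3 \<Longrightarrow> ns i > 0"
    and reg: "\<And>i. i < 3 \<Longrightarrow> regular (ns i) (Es i) (d i)"
    and d13: "d 0 = d 2"
  defines "N \<equiv> (\<lambda>i::nat. if i = 1 then ns 0 + ns 2 else ns 1)"
    and "a \<equiv> s^2 * (real (d 0) + real (ns 1) - 1) - s * real (d 0) + 1"
    and "b \<equiv> s^2 * (real (d 1) + real (ns 0 + ns 2) - 1) - s * real (d 1) + 1"
  shows "spec (deformed_laplacian (hjoin_order 3 ns) (hjoin_edges 3 P3 ns Es) s) =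
    (image_mset (\<lambda>\<mu>. complex_of_real (s^2 * (real (d 0) + real (N 0) - 1) + 1) - complex_of_real s * \<mu>)
        (spec (adj_mat (ns 0) (Es 0)))
     + image_mset (\<lambda>\<mu>. complex_of_real (s^2 * (real (d 1) + real (N 1) - 1) + 1) - complex_of_real s * \<mu>)
        (spec (adj_mat (ns 1) (Es 1)))
     + image_mset (\<lambda>\<mu>. complex_of_real (s^2 * (real (d 2) + real (N 2) - 1) + 1) - complex_of_real s * \<mu>)
        (spec (adj_mat (ns 2) (Es 2)))
     + {# complex_of_real ((a + b + sqrt ((a - b)^2 + 4 * s^2 * real (ns 1) * real (ns 0 + ns 2))) / 2),
          complex_of_real ((a + b - sqrt ((a - b)^2 + 4 * s^2 * real (ns 1) * real (ns 0 + ns 2))) / 2) #})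
    - {# complex_of_real a, complex_of_real b #}"
proof -
  interpret G: regular_P3_join ns Es d s
    using graphs nonempty reg d13 by unfold_locales
  have shift: "G.hjoin_block_shift i = s^2 * (real (d i) + real (N i) - 1) + 1" if "i < 3" for i
    using that by (simp add: G.hjoin_block_shift_def hjoin_outer_degree_P3 N_def)
  have "G.hjoin_block_shift 0 - s * real (d 0) = a" "G.hjoin_block_shift 1 - s * real (d 1) = b"
    using shift[of 0] shift[of 1] by (simp_all add: N_def a_def b_def)
  from G.char_poly_P3_join[unfolded this]
  have "spec (deformed_laplacian (hjoin_order 3 ns) (hjoin_edges 3 P3 ns Es) s) =
    (\<Sum>i<3. spec (G.hjoin_block i))
    + mset (map complex_of_real [(a + b + sqrt ((a - b)^2 + 4 * s^2 * real (ns 1) * real (ns 0 + ns 2))) / 2,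
        (a + b - sqrt ((a - b)^2 + 4 * s^2 * real (ns 1) * real (ns 0 + ns 2))) / 2])
    - mset (map complex_of_real [a, b])"
    by (rule spec_eq_of_char_poly_eq[OF deformed_laplacian_carrier G.hjoin_block_carrier])
  moreover have "spec (G.hjoin_block i) = image_mset (\<lambda>\<mu>. complex_of_real (s^2 * (real (d i) + real (N i) - 1) + 1)
      - complex_of_real s * \<mu>) (spec (adj_mat (ns i) (Es i)))" if "i < 3" for i
    using that by (simp add: G.hjoin_block_def shift spec_affine adj_mat_def)
  ultimately show ?thesis
    by (simp add: eval_nat_numeral)
qed

end
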